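(* Fix a class table and a security lattice as described in the context. Let $\Gamma$ be a typing context and $T$ a type. Suppose an expression $e$ that contains no abstract expressions is obtained from a single abstract expression $\mathit{eA}:[\Gamma;T]$ by a finite sequence of applications of the refinement rules (R1)–(R8) listed in the context, where each step is applied to some occurrence of an abstract expression anywhere inside the current expression. Then $e$ is well typed in SIFO with $\Gamma \vdash e : T$.
   Context: Security levels form a bounded upper semi-lattice $(L,\le)$ with least element $\bot$; $\mathit{lub}$ denotes least upper bound. Type modifiers: $\mathit{mdf}\in\{\mathtt{mut},\mathtt{imm},\mathtt{capsule},\mathtt{read}\}$, ordered by $\mathtt{capsule}\le \mathit{mdf}\le\mathtt{read}$ for every $\mathit{mdf}$ (reflexive; $\mathtt{mut}$ and $\mathtt{imm}$ incomparable). A type is $T = s\ \mathit{mdf}\ C$ with $s\in L$ and $C$ a class/interface name; $\mathit{sec}(T)=s$, $\mathit{mdf}(T)=\mathit{mdf}$, $\mathit{class}(T)=C$. A fixed class table gives classes $\mathtt{class}\ C\ \mathtt{implements}\ \overline{C}\ \{\overline F\ \overline{MD}\}$ and interfaces $\mathtt{interface}\ C\ \mathtt{extends}\ \overline C\ \{\overline{MH}\}$; $C\le C'$ is the reflexive–transitive closure of implements/extends. Fields have the form $s\ \mathtt{mut}\ C\ f$ or $s\ \mathtt{imm}\ C\ f$; $\mathit{fields}(C)$ is the ordered list $T_1 f_1\dots T_n f_n$ of fields of $C$. Method headers have the form $s\ \mathit{mdf}\ \mathtt{method}\ T\ m(T_1 x_1,\dots,T_n x_n)$. Subtyping: $s\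 \mathit{mdf}\ C\le s\ \mathit{mdf}'\ C'$ iff $C\le C'$ and $\mathit{mdf}\le\mathit{mdf}'$. For $T=s'\ \mathit{mdf}\ C$, $T[s]=\mathit{lub}(s,s')\ \mathit{mdf}\ C$, defined only if $s\le s'$ or $s'\le s$. The partial operation $\triangleright$ on modifiers: $\mathtt{mut}\triangleright \mathit{mdf}=\mathtt{capsule}\triangleright\mathit{mdf}=\mathit{mdf}$; $\mathtt{imm}\triangleright\mathit{mdf}=\mathit{mdf}\triangleright\mathtt{imm}=\mathtt{imm}$; $\mathtt{read}\triangleright\mathtt{mut}=\mathtt{read}$. $\mathit{methTypes}(C,m)$: if $s\ \mathit{mdf}\ \mathtt{method}\ T\ m(T_1x_1\dots T_nx_n)$ is declared in $C$ and $T_0=s\ \mathit{mdf}\ C$, then for every $s'\in L$ (where defined) it contains $T_0[s']\dots T_n[s']\to T[s']$, the same signature with every $\mathtt{mut}$ replaced by $\mathtt{capsule}$, and the same signature with every $\mathtt{read}$ replaced by $\mathtt{imm}$ and every $\mathtt{mut}$ by $\mathtt{capsule}$. Expressions (core fragment): $e ::= \mathit{eA}\mid x\mid e_0.f=e_1\mid e.f\mid e_0.m(e_1,\dots,e_n)\mid \mathtt{new}\ s\ C(e_1,\dots,e_n)$, where $\mathit{eA}$ ranges over abstract expressions, each annotated $\mathit{eA}:[\Gamma;T]$. A typing context is $\Gamma = x_1:T_1,\dots,x_n:T_n$; $\Gamma[\mathtt{mut}\backslash\mathtt{read}]$ replaces each $\mathtt{mut}$ modifier in $\Gamma$ by $\mathtt{read}$.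 SIFO typing ($\Gamma\vdash e:T$) is the least relation closed under: (Subsumption) $\Gamma\vdash e:T'$, $T'\le T$ $\Rightarrow$ $\Gamma\vdash e:T$; (T-Var) $\Gamma\vdash x:\Gamma(x)$; (Field Access) $\Gamma\vdash e_0:s_0\ \mathit{mdf}_0\ C_0$, $s_1\ \mathit{mdf}_1\ C_1\ f\in\mathit{fields}(C_0)$ $\Rightarrow$ $\Gamma\vdash e_0.f:\mathit{lub}(s_0,s_1)\ (\mathit{mdf}_0\triangleright\mathit{mdf}_1)\ C_1$; (Field Assign) $\Gamma\vdash e_0:s_0\ \mathtt{mut}\ C_0$, $\Gamma\vdash e_1:\mathit{lub}(s_0,s)\ \mathit{mdf}\ C$, $s\ \mathit{mdf}\ C\ f\in\mathit{fields}(C_0)$ $\Rightarrow$ $\Gamma\vdash e_0.f=e_1:\mathit{lub}(s_0,s)\ \mathit{mdf}\ C$; (Call) $\Gamma\vdash e_i:T_i$ for $i=0..n$, $T_0\dots T_n\to T\in\mathit{methTypes}(\mathit{class}(T_0),m)$, $\mathit{sec}(T)\ge\mathit{sec}(T_0)$, and $\mathit{sec}(T_i)\ge\mathit{sec}(T_0)$ whenever $\mathit{mdf}(T_i)\in\{\mathtt{mut},\mathtt{capsule}\}$ $\Rightarrow$ $\Gamma\vdash e_0.m(e_1\dots e_n):T$; (New) $\mathit{fields}(C)=T_1f_1\dots T_nf_n$, $\Gamma\vdash e_i:T_i[s]$ for all $i$ $\Rightarrow$ $\Gamma\vdash\mathtt{new}\ s\ C(e_1\dots e_n):s\ \mathtt{mut}\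 C$; (Prom) $\Gamma[\mathtt{mut}\backslash\mathtt{read}]\vdash e:s\ \mathtt{mut}\ C$ $\Rightarrow$ $\Gamma\vdash e:s\ \mathtt{capsule}\ C$; (Sec-Prom) $s'\le s$, $\Gamma\vdash e:s'\ \mathit{mdf}\ C$, $\mathit{mdf}\in\{\mathtt{imm},\mathtt{capsule}\}$ $\Rightarrow$ $\Gamma\vdash e:s\ \mathit{mdf}\ C$. Refinement rules (new abstract expressions are fresh, with the stated annotations): (R1 Variable) $\mathit{eA}:[\Gamma;T]$ becomes $x$ if $\Gamma(x)=T$. (R2 Field Assignment) $\mathit{eA}:[\Gamma;s_1\ \mathit{mdf}\ C]$ becomes $\mathit{eA}_0.f=\mathit{eA}_1$ with $\mathit{eA}_0:[\Gamma;s_0\ \mathtt{mut}\ C_0]$, $\mathit{eA}_1:[\Gamma;s_1\ \mathit{mdf}\ C]$, if $s\ \mathit{mdf}\ C\ f\in\mathit{fields}(C_0)$ and $s_1=\mathit{lub}(s_0,s)$. (R3 Field Access) $\mathit{eA}:[\Gamma;s\ \mathit{mdf}\ C]$ becomes $\mathit{eA}_0.f$ with $\mathit{eA}_0:[\Gamma;s_0\ \mathit{mdf}_0\ C_0]$, if $s_1\ \mathit{mdf}_1\ C\ f\in\mathit{fields}(C_0)$, $s=\mathit{lub}(s_0,s_1)$, $\mathit{mdf}_0\triangleright\mathit{mdf}_1=\mathit{mdf}$. (R4 Method Call) $\mathit{eA}:[\Gamma;T]$ becomes $\mathit{eA}_0.m(\mathit{eA}_1,\dots,\mathit{eA}_n)$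 with $\mathit{eA}_i:[\Gamma;T_i]$, if $T_0\dots T_n\to T\in\mathit{methTypes}(\mathit{class}(T_0),m)$, $\mathit{sec}(T)\ge\mathit{sec}(T_0)$, and for all $i\in\{1..n\}$ with $\mathit{mdf}(T_i)\in\{\mathtt{mut},\mathtt{capsule}\}$, $\mathit{sec}(T_i)\ge\mathit{sec}(T_0)$. (R5 Constructor) $\mathit{eA}:[\Gamma;s\ \mathtt{mut}\ C]$ becomes $\mathtt{new}\ s\ C(\mathit{eA}_1\dots\mathit{eA}_n)$ with $\mathit{eA}_i:[\Gamma;T_i[s]]$, if $\mathit{fields}(C)=T_1f_1\dots T_nf_n$. (R6 Subsumption) $\mathit{eA}:[\Gamma;T]$ becomes $\mathit{eA}_1:[\Gamma;T']$ if $T'\le T$. (R7 Security Promotion) $\mathit{eA}:[\Gamma;s\ \mathit{mdf}\ C]$ becomes $\mathit{eA}_1:[\Gamma;s'\ \mathit{mdf}\ C]$ if $\mathit{mdf}\in\{\mathtt{capsule},\mathtt{imm}\}$ and $s'\le s$. (R8 Modifier Promotion) $\mathit{eA}:[\Gamma;s\ \mathtt{capsule}\ C]$ becomes $\mathit{eA}_1:[\Gamma[\mathtt{mut}\backslash\mathtt{read}];s\ \mathtt{mut}\ C]$. *)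

theory Defs
  imports Main
begin

(* Security levels: a type 's of class bounded_semilattice_sup_bot
   (upper semilattice with least element bot); lub = sup. *)

datatype mdf = Mut | Imm | Capsule | Read

definition mdf_le :: "mdf \<Rightarrow> mdf \<Rightarrow> bool" where
  "mdf_le m m' \<longleftrightarrow> m = m' \<or> m = Capsule \<or> m' = Read"

datatype ('s, 'c) ty = Ty (sec: 's) (mdf: mdf) (cls: 'c)

(* method header  s mdf method T m(T1 x1, ..., Tn xn) *)
datatype ('s, 'c, 'm, 'v) mheader = MH 's mdf "('s, 'c) ty" 'm "(('s, 'c) ty \<times> 'v) list"

type_synonym ('s, 'c, 'v) ctx = "'v \<Rightarrow> ('s, 'c) ty option"

(* expressions; EAbs \<Gamma> T is an abstract expression eA:[\<Gamma>;T] *)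
datatype ('s, 'c, 'f, 'm, 'v) expr =
    EAbs "('s, 'c, 'v) ctx" "('s, 'c) ty"
  | Var 'v
  | FAssign "('s, 'c, 'f, 'm, 'v) expr" 'f "('s, 'c, 'f, 'm, 'v) expr"
  | FAcc "('s, 'c, 'f, 'm, 'v) expr" 'f
  | Call "('s, 'c, 'f, 'm, 'v) expr" 'm "('s, 'c, 'f, 'm, 'v) expr list"
  | New 's 'c "('s, 'c, 'f, 'm, 'v) expr list"

datatype ('s, 'c, 'f, 'm, 'v) decl =
    ClassDecl "'c list" "(('s, 'c) ty \<times> 'f) list"
              "(('s, 'c, 'm, 'v) mheader \<times> ('s, 'c, 'f, 'm, 'v) expr) list"
  | InterfaceDecl "'c list" "('s, 'c, 'm, 'v) mheader list"

type_synonym ('s, 'c, 'f, 'm, 'v) ctable = "'c \<Rightarrow> ('s, 'c, 'f, 'm, 'v) decl option"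

fun supers :: "('s, 'c, 'f, 'm, 'v) decl \<Rightarrow> 'c list" where
  "supers (ClassDecl cs _ _) = cs"
| "supers (InterfaceDecl cs _) = cs"

fun headers :: "('s, 'c, 'f, 'm, 'v) decl \<Rightarrow> ('s, 'c, 'm, 'v) mheader list" where
  "headers (ClassDecl _ _ mds) = map fst mds"
| "headers (InterfaceDecl _ mhs) = mhs"

definition fields :: "('s, 'c, 'f, 'm, 'v) ctable \<Rightarrow> 'c \<Rightarrow> (('s, 'c) ty \<times> 'f) list" where
  "fields CT C = (case CT C of Some (ClassDecl _ fs _) \<Rightarrow> fs | _ \<Rightarrow> [])"

definition wf_fields :: "('s, 'c, 'f, 'm, 'v) ctable \<Rightarrow> bool" where
  "wf_fields CT \<longleftrightarrow> (\<forall>C T f. (T, f) \<in> set (fields CT C) \<longrightarrow> mdf T \<in> {Mut, Imm})"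

definition is_subclass :: "('s, 'c, 'f, 'm, 'v) ctable \<Rightarrow> 'c \<Rightarrow> 'c \<Rightarrow> bool" where
  "is_subclass CT C C' \<longleftrightarrow>
     (C, C') \<in> {(A, B). \<exists>d. CT A = Some d \<and> B \<in> set (supers d)}\<^sup>*"

definition subtype :: "('s, 'c, 'f, 'm, 'v) ctable \<Rightarrow> ('s, 'c) ty \<Rightarrow> ('s, 'c) ty \<Rightarrow> bool" where
  "subtype CT T T' \<longleftrightarrow>
     sec T = sec T' \<and> is_subclass CT (cls T) (cls T') \<and> mdf_le (mdf T) (mdf T')"

definition lift :: "'s::bounded_semilattice_sup_bot \<Rightarrow> ('s, 'c) ty \<Rightarrow> ('s, 'c) ty option" where
  "lift s T = (if s \<le> sec T \<or> sec T \<le> s then Some (Ty (sup s (sec T)) (mdf T) (cls T)) else None)"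

fun vp :: "mdf \<Rightarrow> mdf \<Rightarrow> mdf option" where
  "vp Mut m = Some m"
| "vp Capsule m = Some m"
| "vp Imm _ = Some Imm"
| "vp Read Imm = Some Imm"
| "vp Read Mut = Some Read"
| "vp Read _ = None"

definition map_mdf :: "(mdf \<Rightarrow> mdf) \<Rightarrow> ('s, 'c) ty \<Rightarrow> ('s, 'c) ty" where
  "map_mdf g T = Ty (sec T) (g (mdf T)) (cls T)"

definition mut_to_capsule :: "mdf \<Rightarrow> mdf" where
  "mut_to_capsule m = (if m = Mut then Capsule else m)"

definition read_to_imm_mut_to_capsule :: "mdf \<Rightarrow> mdf" where
  "read_to_imm_mut_to_capsule m = (if m = Read then Imm else if m = Mut then Capsule else m)"

definition mut_to_read :: "mdf \<Rightarrow> mdf" where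
  "mut_to_read m = (if m = Mut then Read else m)"

definition ctx_mut_read :: "('s, 'c, 'v) ctx \<Rightarrow> ('s, 'c, 'v) ctx" where
  "ctx_mut_read \<Gamma> = (\<lambda>x. map_option (map_mdf mut_to_read) (\<Gamma> x))"

type_synonym ('s, 'c) msig = "('s, 'c) ty list \<times> ('s, 'c) ty"

definition map_sig :: "(mdf \<Rightarrow> mdf) \<Rightarrow> ('s, 'c) msig \<Rightarrow> ('s, 'c) msig" where
  "map_sig g sg = (map (map_mdf g) (fst sg), map_mdf g (snd sg))"

definition methTypes :: "('s::bounded_semilattice_sup_bot, 'c, 'f, 'm, 'v) ctable \<Rightarrow> 'c \<Rightarrow> 'm
                         \<Rightarrow> ('s, 'c) msig set" where
  "methTypes CT C m = {sg. \<exists>d s md T ps s' Ts' T'.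
      CT C = Some d \<and> MH s md T m ps \<in> set (headers d) \<and>
      those (map (lift s') (Ty s md C # map fst ps)) = Some Ts' \<and> lift s' T = Some T' \<and>
      (sg = (Ts', T') \<or> sg = map_sig mut_to_capsule (Ts', T')
        \<or> sg = map_sig read_to_imm_mut_to_capsule (Ts', T')) }"

inductive typing :: "('s::bounded_semilattice_sup_bot, 'c, 'f, 'm, 'v) ctable \<Rightarrow> ('s, 'c, 'v) ctx
                     \<Rightarrow> ('s, 'c, 'f, 'm, 'v) expr \<Rightarrow> ('s, 'c) ty \<Rightarrow> bool"
  for CT :: "('s::bounded_semilattice_sup_bot, 'c, 'f, 'm, 'v) ctable" where
  T_Sub: "typing CT \<Gamma> e T' \<Longrightarrow> subtype CT T' T \<Longrightarrow> typing CT \<Gamma> e T"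
| T_Var: "\<Gamma> x = Some T \<Longrightarrow> typing CT \<Gamma> (Var x) T"
| T_Field: "typing CT \<Gamma> e0 (Ty s0 mdf0 C0) \<Longrightarrow> (Ty s1 mdf1 C1, f) \<in> set (fields CT C0)
      \<Longrightarrow> vp mdf0 mdf1 = Some md \<Longrightarrow> typing CT \<Gamma> (FAcc e0 f) (Ty (sup s0 s1) md C1)"
| T_Assign: "typing CT \<Gamma> e0 (Ty s0 Mut C0) \<Longrightarrow> typing CT \<Gamma> e1 (Ty (sup s0 s) md C)
      \<Longrightarrow> (Ty s md C, f) \<in> set (fields CT C0)
      \<Longrightarrow> typing CT \<Gamma> (FAssign e0 f e1) (Ty (sup s0 s) md C)"
| T_Call: "list_all2 (typing CT \<Gamma>) (e0 # es) (T0 # Ts)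
      \<Longrightarrow> (T0 # Ts, T) \<in> methTypes CT (cls T0) m
      \<Longrightarrow> sec T0 \<le> sec T
      \<Longrightarrow> (\<forall>Ti \<in> set Ts. mdf Ti \<in> {Mut, Capsule} \<longrightarrow> sec T0 \<le> sec Ti)
      \<Longrightarrow> typing CT \<Gamma> (Call e0 m es) T"
| T_New: "length es = length (fields CT C)
      \<Longrightarrow> (\<forall>i < length es. \<exists>Ti'. lift s (fst (fields CT C ! i)) = Some Ti'
                                \<and> typing CT \<Gamma> (es ! i) Ti')
      \<Longrightarrow> typing CT \<Gamma> (New s C es) (Ty s Mut C)"
| T_Prom: "typing CT (ctx_mut_read \<Gamma>) e (Ty s Mut C) \<Longrightarrow> typing CT \<Gamma> e (Ty s Capsule C)"
| T_SecProm: "s' \<le> s \<Longrightarrow> typing CT \<Gamma> e (Ty s' md C) \<Longrightarrow> md \<in> {Imm, Capsule}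
      \<Longrightarrow> typing CT \<Gamma> e (Ty s md C)"

(* refinement rules R1-R8: an abstract expression eA:[\<Gamma>;T] becomes e *)
inductive refine :: "('s::bounded_semilattice_sup_bot, 'c, 'f, 'm, 'v) ctable \<Rightarrow> ('s, 'c, 'v) ctx
                     \<Rightarrow> ('s, 'c) ty \<Rightarrow> ('s, 'c, 'f, 'm, 'v) expr \<Rightarrow> bool"
  for CT :: "('s::bounded_semilattice_sup_bot, 'c, 'f, 'm, 'v) ctable" where
  R1: "\<Gamma> x = Some T \<Longrightarrow> refine CT \<Gamma> T (Var x)"
| R2: "(Ty s md C, f) \<in> set (fields CT C0) \<Longrightarrow> s1 = sup s0 s
      \<Longrightarrow> refine CT \<Gamma> (Ty s1 md C) (FAssign (EAbs \<Gamma> (Ty s0 Mut C0)) f (EAbs \<Gamma> (Ty s1 md C)))"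
| R3: "(Ty s1 mdf1 C, f) \<in> set (fields CT C0) \<Longrightarrow> s = sup s0 s1 \<Longrightarrow> vp mdf0 mdf1 = Some md
      \<Longrightarrow> refine CT \<Gamma> (Ty s md C) (FAcc (EAbs \<Gamma> (Ty s0 mdf0 C0)) f)"
| R4: "(T0 # Ts, T) \<in> methTypes CT (cls T0) m \<Longrightarrow> sec T0 \<le> sec T
      \<Longrightarrow> (\<forall>Ti \<in> set Ts. mdf Ti \<in> {Mut, Capsule} \<longrightarrow> sec T0 \<le> sec Ti)
      \<Longrightarrow> refine CT \<Gamma> T (Call (EAbs \<Gamma> T0) m (map (EAbs \<Gamma>) Ts))"
| R5: "those (map (\<lambda>(Ti, fi). lift s Ti) (fields CT C)) = Some Ts
      \<Longrightarrow> refine CT \<Gamma> (Ty s Mut C) (New s C (map (EAbs \<Gamma>) Ts))"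
| R6: "subtype CT T' T \<Longrightarrow> refine CT \<Gamma> T (EAbs \<Gamma> T')"
| R7: "md \<in> {Capsule, Imm} \<Longrightarrow> s' \<le> s \<Longrightarrow> refine CT \<Gamma> (Ty s md C) (EAbs \<Gamma> (Ty s' md C))"
| R8: "refine CT \<Gamma> (Ty s Capsule C) (EAbs (ctx_mut_read \<Gamma>) (Ty s Mut C))"

inductive rstep :: "('s::bounded_semilattice_sup_bot, 'c, 'f, 'm, 'v) ctable
                    \<Rightarrow> ('s, 'c, 'f, 'm, 'v) expr \<Rightarrow> ('s, 'c, 'f, 'm, 'v) expr \<Rightarrow> bool"
  for CT :: "('s::bounded_semilattice_sup_bot, 'c, 'f, 'm, 'v) ctable" where
  here: "refine CT \<Gamma> T e \<Longrightarrow> rstep CT (EAbs \<Gamma> T) e"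
| assign_l: "rstep CT e0 e0' \<Longrightarrow> rstep CT (FAssign e0 f e1) (FAssign e0' f e1)"
| assign_r: "rstep CT e1 e1' \<Longrightarrow> rstep CT (FAssign e0 f e1) (FAssign e0 f e1')"
| acc: "rstep CT e0 e0' \<Longrightarrow> rstep CT (FAcc e0 f) (FAcc e0' f)"
| call_recv: "rstep CT e0 e0' \<Longrightarrow> rstep CT (Call e0 m es) (Call e0' m es)"
| call_arg: "rstep CT e e' \<Longrightarrow> rstep CT (Call e0 m (es1 @ e # es2)) (Call e0 m (es1 @ e' # es2))"
| new_arg: "rstep CT e e' \<Longrightarrow> rstep CT (New s C (es1 @ e # es2)) (New s C (es1 @ e' # es2))"

fun no_abs :: "('s, 'c, 'f, 'm, 'v) expr \<Rightarrow> bool" where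
  "no_abs (EAbs _ _) = False"
| "no_abs (Var _) = True"
| "no_abs (FAssign e0 _ e1) = (no_abs e0 \<and> no_abs e1)"
| "no_abs (FAcc e0 _) = no_abs e0"
| "no_abs (Call e0 _ es) = (no_abs e0 \<and> (\<forall>e \<in> set es. no_abs e))"
| "no_abs (New _ _ es) = (\<forall>e \<in> set es. no_abs e)"

end

theory Submission
  imports Defs
begin

(* Extend SIFO typing by one axiom: an abstract expression eA:[\<Gamma>;T] has type T in \<Gamma>.
   Every refinement rule R1-R8 is then a derived typing rule for its right-hand side, and
   since typing is compositional, replacing a typed abstract subexpression by a term of the
   same type preserves the type of the whole expression. *)

inductive typing_abs :: "('s::bounded_semilattice_sup_bot, 'c, 'f, 'm, 'v) ctable
                         \<Rightarrow> ('s, 'c, 'v) ctx \<Rightarrow> ('s, 'c, 'f, 'm, 'v) expr \<Rightarrow> ('s, 'c) ty \<Rightarrow> bool"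
  for CT :: "('s::bounded_semilattice_sup_bot, 'c, 'f, 'm, 'v) ctable" where
  TA_Sub: "typing_abs CT \<Gamma> e T' \<Longrightarrow> subtype CT T' T \<Longrightarrow> typing_abs CT \<Gamma> e T"
| TA_Var: "\<Gamma> x = Some T \<Longrightarrow> typing_abs CT \<Gamma> (Var x) T"
| TA_Field: "typing_abs CT \<Gamma> e0 (Ty s0 mdf0 C0) \<Longrightarrow> (Ty s1 mdf1 C1, f) \<in> set (fields CT C0)
      \<Longrightarrow> vp mdf0 mdf1 = Some md \<Longrightarrow> typing_abs CT \<Gamma> (FAcc e0 f) (Ty (sup s0 s1) md C1)"
| TA_Assign: "typing_abs CT \<Gamma> e0 (Ty s0 Mut C0) \<Longrightarrow> typing_abs CT \<Gamma> e1 (Ty (sup s0 s) md C)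
      \<Longrightarrow> (Ty s md C, f) \<in> set (fields CT C0)
      \<Longrightarrow> typing_abs CT \<Gamma> (FAssign e0 f e1) (Ty (sup s0 s) md C)"
| TA_Call: "list_all2 (typing_abs CT \<Gamma>) (e0 # es) (T0 # Ts)
      \<Longrightarrow> (T0 # Ts, T) \<in> methTypes CT (cls T0) m
      \<Longrightarrow> sec T0 \<le> sec T
      \<Longrightarrow> (\<forall>Ti \<in> set Ts. mdf Ti \<in> {Mut, Capsule} \<longrightarrow> sec T0 \<le> sec Ti)
      \<Longrightarrow> typing_abs CT \<Gamma> (Call e0 m es) T"
| TA_New: "length es = length (fields CT C)
      \<Longrightarrow> (\<forall>i < length es. \<exists>Ti'. lift s (fst (fields CT C ! i)) = Some Ti'
                                \<and> typing_abs CT \<Gamma> (es ! i) Ti')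
      \<Longrightarrow> typing_abs CT \<Gamma> (New s C es) (Ty s Mut C)"
| TA_Prom: "typing_abs CT (ctx_mut_read \<Gamma>) e (Ty s Mut C) \<Longrightarrow> typing_abs CT \<Gamma> e (Ty s Capsule C)"
| TA_SecProm: "s' \<le> s \<Longrightarrow> typing_abs CT \<Gamma> e (Ty s' md C) \<Longrightarrow> md \<in> {Imm, Capsule}
      \<Longrightarrow> typing_abs CT \<Gamma> e (Ty s md C)"
| TA_Abs: "typing_abs CT \<Gamma> (EAbs \<Gamma> T) T"

lemma those_eq_Some_iff: "those xs = Some ys \<longleftrightarrow> xs = map Some ys"
  by (induction xs arbitrary: ys) (auto split: option.splits)

lemma list_all2_update_step:
  assumes "list_all2 (\<lambda>a b. P a b \<and> (\<forall>a'. R a a' \<longrightarrow> P a' b)) xs ys"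
    and "R (xs ! i) x"
  shows "list_all2 P (xs[i := x]) ys"
proof -
  have "list_all2 P xs ys"
    using assms(1) by (rule list_all2_mono) simp
  moreover have "P x (ys ! i)" if "i < length xs"
    using assms that by (auto dest: list_all2_nthD)
  ultimately show ?thesis
    using list_all2_update_cong[of P xs ys x "ys ! i" i]
    by (cases "i < length xs") (simp_all add: list_update_beyond)
qed

lemma refine_imp_typing_abs: "refine CT \<Gamma> T e \<Longrightarrow> typing_abs CT \<Gamma> e T"
proof (induction rule: refine.induct)
  case (R1 \<Gamma> x T)
  then show ?case by (rule TA_Var)
next
  case R2
  then show ?case by (auto intro!: TA_Assign TA_Abs)
next
  case R3
  then show ?case by (auto intro: TA_Field[OF TA_Abs])
next
  case (R4 T0 Ts T m \<Gamma>)
  have "list_all2 (typing_abs CT \<Gamma>) (map (EAbs \<Gamma>) (T0 # Ts)) (T0 # Ts)"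
    by (auto simp: list_all2_map1 intro: list_all2_refl TA_Abs)
  with R4 show ?case by (auto intro: TA_Call)
next
  case (R5 s C Ts \<Gamma>)
  then have lifted: "map (\<lambda>(Ti, fi). lift s Ti) (fields CT C) = map Some Ts"
    by (simp add: those_eq_Some_iff)
  then have "length Ts = length (fields CT C)"
    using map_eq_imp_length_eq by metis
  moreover have "lift s (fst (fields CT C ! i)) = Some (Ts ! i)" if "i < length Ts" for i
    using arg_cong[OF lifted, of "\<lambda>xs. xs ! i"] that \<open>length Ts = _\<close>
    by (simp add: case_prod_beta)
  ultimately show ?case by (auto intro!: TA_New TA_Abs)
next
  case R6
  then show ?case by (rule TA_Sub[OF TA_Abs])
next
  case R7
  then show ?case by (auto intro: TA_SecProm[OF _ TA_Abs])
next
  case R8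
  then show ?case by (rule TA_Prom[OF TA_Abs])
qed

lemma rstep_preserves_typing_abs:
  "typing_abs CT \<Gamma> e T \<Longrightarrow> rstep CT e e' \<Longrightarrow> typing_abs CT \<Gamma> e' T"
proof (induction arbitrary: e' rule: typing_abs.induct)
  case (TA_Field \<Gamma> e0 s0 mdf0 C0 s1 mdf1 C1 f md)
  from TA_Field.prems show ?case
    by cases (auto intro: typing_abs.TA_Field TA_Field.IH TA_Field.hyps)
next
  case (TA_Assign \<Gamma> e0 s0 C0 e1 s md C f)
  from TA_Assign.prems show ?case
    by cases (auto intro: typing_abs.TA_Assign TA_Assign.IH TA_Assign.hyps)
next
  case (TA_Call \<Gamma> e0 es T0 Ts T m)
  from TA_Call.prems show ?case
  proof (cases rule: rstep.cases)
    case (call_recv e0')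
    with TA_Call.IH have "list_all2 (typing_abs CT \<Gamma>) ((e0 # es)[0 := e0']) (T0 # Ts)"
      by (intro list_all2_update_step[where R = "rstep CT"]) auto
    with TA_Call.hyps call_recv show ?thesis by (auto intro: typing_abs.TA_Call)
  next
    case (call_arg e e'' es1 es2)
    with TA_Call.IH
    have "list_all2 (typing_abs CT \<Gamma>) ((e0 # es)[Suc (length es1) := e'']) (T0 # Ts)"
      by (intro list_all2_update_step[where R = "rstep CT"]) (auto simp: nth_append)
    with TA_Call.hyps call_arg show ?thesis by (auto intro: typing_abs.TA_Call)
  qed
next
  case (TA_New es C s \<Gamma>)
  from TA_New.prems show ?case
  proof (cases rule: rstep.cases)
    case (new_arg e e'' es1 es2)
    then have e': "e' = New s C (es[length es1 := e''])"
      and step: "rstep CT (es ! length es1) e''"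
      by simp_all
    show ?thesis
      unfolding e'
    proof (intro typing_abs.TA_New allI impI)
      show "length (es[length es1 := e'']) = length (fields CT C)"
        using TA_New.hyps by simp
      fix i
      assume i: "i < length (es[length es1 := e''])"
      then obtain Ti' where "lift s (fst (fields CT C ! i)) = Some Ti'"
        and "typing_abs CT \<Gamma> (es ! i) Ti'"
        and "\<forall>x. rstep CT (es ! i) x \<longrightarrow> typing_abs CT \<Gamma> x Ti'"
        using TA_New.IH by auto
      with step i show "\<exists>Ti'. lift s (fst (fields CT C ! i)) = Some Ti'
                               \<and> typing_abs CT \<Gamma> (es[length es1 := e''] ! i) Ti'"
        by (cases "i = length es1") auto
    qed
  qed
next
  case TA_Abs
  then show ?case by (auto elim: rstep.cases intro: refine_imp_typing_abs)
qed (auto elim: rstep.cases intro: typing_abs.intros)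

lemma typing_abs_imp_typing: "typing_abs CT \<Gamma> e T \<Longrightarrow> no_abs e \<Longrightarrow> typing CT \<Gamma> e T"
proof (induction rule: typing_abs.induct)
  case (TA_Call \<Gamma> e0 es T0 Ts T m)
  have "list_all2 (typing CT \<Gamma>) (e0 # es) (T0 # Ts)"
    using TA_Call.IH by (rule list.rel_mono_strong) (use TA_Call.prems in auto)
  then show ?case using TA_Call.hyps by (rule T_Call)
next
  case (TA_New es C s \<Gamma>)
  then show ?case by (auto intro!: T_New)
qed (auto intro: typing.intros)

theorem theorem1:
  fixes CT :: "('s::bounded_semilattice_sup_bot, 'c, 'f, 'm, 'v) ctable"
    and \<Gamma> :: "('s, 'c, 'v) ctx" and T :: "('s, 'c) ty"
    and e :: "('s, 'c, 'f, 'm, 'v) expr"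
  assumes "wf_fields CT"
    and "(rstep CT)\<^sup>*\<^sup>* (EAbs \<Gamma> T) e"
    and "no_abs e"
  shows "typing CT \<Gamma> e T"
proof -
  have "typing_abs CT \<Gamma> e T"
    using assms(2)
    by (induction rule: rtranclp_induct) (auto intro: TA_Abs rstep_preserves_typing_abs)
  then show ?thesis
    using assms(3) by (rule typing_abs_imp_typing)
qed

end
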